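(* Fix a parameter space $W$, a data space $X$, an update rule $g: W\times X\to W$, a metric $d$ on $W$ and initial parameters $\mathbf{w}_0\in W$. Let $D, D'\subseteq X$ be datasets that are forgeable with $\epsilon=0$. Then $H_D(w)=H_{D'}(w)$.
   Context: A valid $(g,d,\epsilon)$ log is a sequence $\{(\mathbf{w}_i,\mathbf{x}_i)\}_{i\in J}$ ($J$ a countable index set, consecutive indices) of parameter/data-point pairs such that $d(\mathbf{w}_{i+1}, g(\mathbf{w}_i,\mathbf{x}_i))\le \epsilon$ for all $i\in J$. For a dataset $D$, $H_{D,g,d,\epsilon}$ denotes the set of all valid $(g,d,\epsilon)$ logs starting from the fixed $\mathbf{w}_0$ whose data points $\mathbf{x}_i$ all lie in $D$. A forging map from $D$ to $D'$ (with $\epsilon$) is a map $B: H_{D,g,d,0}\to H_{D',g,d,\epsilon}$ of the form $B(\{(\mathbf{w}_i,\mathbf{x}_i)\}_{i\in J})=\{(\mathbf{w}_i,\tilde{\mathbf{x}}_i)\}_{i\in J}$ (identity on the parameters, data points replaced by $\tilde{\mathbf{x}}_i\in D'$, the result being a valid $(g,d,\epsilon)$ log). $D'$ forges $D$ with $\epsilon$ if such a map exists; $D$ and $D'$ are forgeable with $\epsilon$ if $D'$ forges $D$ with $\epsilon$ and $D$ forges $D'$ with $\epsilon$. $H_D(w)$ denotes the set of all parameters $\mathbf{w}_i$ appearing in logs in $H_{D,g,d,0}$ (and similarly $H_{D'}(w)$). *)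

theory Defs
  imports "HOL-Analysis.Analysis" "HOL-Library.Extended_Nat"
begin

text \<open>A log is a pair (n, L): index set J = {i. i < n} (n :: enat, so finite or
  countably infinite, consecutive indices starting at 0), and L i = (w_i, x_i).
  The metric d on W is the dist of the metric_space type class.\<close>

type_synonym ('w, 'x) log = "enat \<times> (nat \<Rightarrow> 'w \<times> 'x)"

definition valid_log :: "('w::metric_space \<Rightarrow> 'x \<Rightarrow> 'w) \<Rightarrow> real \<Rightarrow> ('w, 'x) log \<Rightarrow> bool" where
  "valid_log g eps l \<longleftrightarrow>
     (\<forall>i. enat (Suc i) < fst l \<longrightarrow>
        dist (fst (snd l (Suc i))) (g (fst (snd l i)) (snd (snd l i))) \<le> eps)"

definition logs_H :: "('w::metric_space \<Rightarrow> 'x \<Rightarrow> 'w) \<Rightarrow> 'w \<Rightarrow> 'x set \<Rightarrow> real \<Rightarrow> ('w, 'x) log set" where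
  "logs_H g w0 D eps = {l. 0 < fst l \<and> fst (snd l 0) = w0 \<and> valid_log g eps l \<and>
       (\<forall>i. enat i < fst l \<longrightarrow> snd (snd l i) \<in> D)}"

definition forging_map :: "('w::metric_space \<Rightarrow> 'x \<Rightarrow> 'w) \<Rightarrow> 'w \<Rightarrow> 'x set \<Rightarrow> 'x set \<Rightarrow> real
     \<Rightarrow> (('w, 'x) log \<Rightarrow> ('w, 'x) log) \<Rightarrow> bool" where
  "forging_map g w0 D D' eps B \<longleftrightarrow>
     (\<forall>l \<in> logs_H g w0 D 0. B l \<in> logs_H g w0 D' eps \<and> fst (B l) = fst l \<and>
        (\<forall>i. enat i < fst l \<longrightarrow> fst (snd (B l) i) = fst (snd l i)))"

text \<open>forges g w0 D' D eps: D' forges D with eps.\<close>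
definition forges :: "('w::metric_space \<Rightarrow> 'x \<Rightarrow> 'w) \<Rightarrow> 'w \<Rightarrow> 'x set \<Rightarrow> 'x set \<Rightarrow> real \<Rightarrow> bool" where
  "forges g w0 D' D eps \<longleftrightarrow> (\<exists>B. forging_map g w0 D D' eps B)"

definition forgeable :: "('w::metric_space \<Rightarrow> 'x \<Rightarrow> 'w) \<Rightarrow> 'w \<Rightarrow> 'x set \<Rightarrow> 'x set \<Rightarrow> real \<Rightarrow> bool" where
  "forgeable g w0 D D' eps \<longleftrightarrow> forges g w0 D' D eps \<and> forges g w0 D D' eps"

definition H_params :: "('w::metric_space \<Rightarrow> 'x \<Rightarrow> 'w) \<Rightarrow> 'w \<Rightarrow> 'x set \<Rightarrow> 'w set" where
  "H_params g w0 D = {fst (snd l i) | l i. l \<in> logs_H g w0 D 0 \<and> enat i < fst l}"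

end

theory Submission
  imports Defs
begin

lemma forges_imp_H_params_subset:
  assumes "forges g w0 D' D 0"
  shows "H_params g w0 D \<subseteq> H_params g w0 D'"
proof
  fix w
  assume "w \<in> H_params g w0 D"
  then obtain l i where l: "l \<in> logs_H g w0 D 0" "enat i < fst l" and w: "w = fst (snd l i)"
    unfolding H_params_def by blast
  from assms obtain B where "forging_map g w0 D D' 0 B"
    unfolding forges_def by blast
  with l have "B l \<in> logs_H g w0 D' 0" "enat i < fst (B l)" "fst (snd (B l) i) = w"
    unfolding forging_map_def w by auto
  then show "w \<in> H_params g w0 D'"
    unfolding H_params_def by blast
qed

theorem lemma1:
  fixes g :: "'w::metric_space \<Rightarrow> 'x \<Rightarrow> 'w" and w0 :: 'w and D D' :: "'x set"
  assumes "forgeable g w0 D D' 0"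
  shows "H_params g w0 D = H_params g w0 D'"
proof -
  from assms have "forges g w0 D' D 0" "forges g w0 D D' 0"
    unfolding forgeable_def by auto
  then show ?thesis
    by (intro subset_antisym forges_imp_H_params_subset)
qed

end
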